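(* Let $(x_t^m)_{t\ge0}$ be iterates generated by Algorithm SAVIC (described in the context) run with identical data. Suppose $f$ is $\mu$-strongly convex and $L$-smooth, that the matrices $\hat D^{t_p}$ satisfy $\alpha I\preceq\hat D^{t_p}\preceq\Gamma I$ for constants $0<\alpha\le\Gamma$, and that $\gamma\le\frac{\alpha}{4L}$. Then for any $t$ with $t_p\le t<t_{p+1}$, $$\mathbb E\|\hat x_{t+1}-x_*\|^2_{\hat D^{t_p}}\le\left(1-\frac{\gamma\mu}{\Gamma}\right)\mathbb E\|\hat x_t-x_*\|^2_{\hat D^{t_p}}+\frac{\gamma^2}{\alpha}\mathbb E\|g_t-\bar g_t\|^2-\frac{\gamma}{2}\mathbb E[D_f(\hat x_t,x_* )]+\frac{2\gamma L}{\alpha}V_t.$$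
   Context: Problem: minimize $f(x)=\frac1M\sum_m f_m(x)$, $f_m(x)=\mathbb E_{z\sim\mathcal D_m}[f_m(x,z)]$, $x_*$ the solution; identical data means $f_1=\dots=f_M=f$ and stochastic gradients $\nabla f(x_t^m,z_m)$ with $\mathbb E[\nabla f(x_t^m,z_m)\mid x_t^m]=\nabla f(x_t^m)$. $\mu$-strong convexity and $L$-smoothness: $\frac{\mu}{2}\|x-y\|^2\le f(x)-f(y)-\langle\nabla f(y),x-y\rangle\le\frac{L}{2}\|x-y\|^2$. $\|x\|_A^2=\langle x,Ax\rangle$. Bregman divergence $D_f(x,y)=f(x)-f(y)-\langle\nabla f(y),x-y\rangle$. Algorithm SAVIC: stepsize $\gamma>0$, $x_0^m=x_0$, synchronization times $t_0=0<t_1<\dots$; at $t=t_p$ a diagonal positive definite matrix $\hat D^{t_p}$ is updated and used by all clients for $t_p\le t<t_{p+1}$; client $m$ samples $z_m\sim\mathcal D_m$ i.i.d. and sets $x_{t+1}^m=\frac1M\sum_j(x_t^j-\gamma(\hat D^{t_p})^{-1}\nabla f_j(x_t^j,z_j))$ if $t=t_p$ for some $p$, else $x_{t+1}^m=x_t^m-\gamma(\hat D^{t_p})^{-1}\nabla f_m(x_t^m,z_m)$. Notation: $g_t^m=\nabla f(x_t^m,z_m)$, $g_t=\frac1M\sum_mg_t^m$, $\bar g_t=\mathbb E[g_t]=\frac1M\sum_m\nabla f(x_t^m)$; $\hat x_t=\frac1M\sum_mx_t^m$; $V_t=\frac1M\sum_m\|x_t^m-\hat x_t\|^2_{\hat D^{t_p}}$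 for $t_p\le t<t_{p+1}$. *)

theory Defs
  imports "HOL-Probability.Probability"
begin

definition sqnormA :: "real^'n^'n \<Rightarrow> real^'n \<Rightarrow> real" where
  "sqnormA A x = x \<bullet> (A *v x)"

definition bregman :: "(real^'n \<Rightarrow> real) \<Rightarrow> (real^'n \<Rightarrow> real^'n) \<Rightarrow> real^'n \<Rightarrow> real^'n \<Rightarrow> real" where
  "bregman f gf x y = f x - f y - gf y \<bullet> (x - y)"

definition diag_mat :: "real^'n^'n \<Rightarrow> bool" where
  "diag_mat A \<longleftrightarrow> (\<forall>i j. i \<noteq> j \<longrightarrow> A $ i $ j = 0)"

text \<open>One SAVIC step for client m (clients 0..<M), identical data, current iterates xs,
  preconditioner D, stochastic gradients gs j (already evaluated at xs j),
  sync = (t is a synchronization time t_p).\<close>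
definition savic_step :: "nat \<Rightarrow> real \<Rightarrow> real^'n^'n \<Rightarrow> bool \<Rightarrow> (nat \<Rightarrow> real^'n) \<Rightarrow> (nat \<Rightarrow> real^'n) \<Rightarrow> nat \<Rightarrow> real^'n" where
  "savic_step M \<gamma> D sync xs gs m =
     (if sync then (1 / real M) *\<^sub>R (\<Sum>j<M. xs j - \<gamma> *\<^sub>R (matrix_inv D *v gs j))
      else xs m - \<gamma> *\<^sub>R (matrix_inv D *v gs m))"

definition avg :: "nat \<Rightarrow> (nat \<Rightarrow> real^'n) \<Rightarrow> real^'n" where
  "avg M v = (1 / real M) *\<^sub>R (\<Sum>m<M. v m)"

end

theory Submission
  imports Defs
begin

text \<open>Averaged over the clients, every SAVIC step (synchronising or not) moves the mean iterate
  \<open>x\<close> by \<open>-\<gamma> D\<^sup>-\<^sup>1 G\<close>, where \<open>G\<close> is the mean sampled gradient. Expanding the \<open>D\<close>-norm and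
  using \<open>\<langle>D\<^sup>-\<^sup>1 G, G\<rangle> \<le> \<parallel>G\<parallel>\<^sup>2 / \<alpha>\<close> bounds the new distance by a quadratic in \<open>G\<close>, whose
  expectation splits (bias-variance) into the mean exact gradient \<open>g = E G\<close> and the variance
  term. The remaining deterministic inequality combines strong convexity and smoothness at
  each client to bound \<open>\<langle>x - x\<^sub>*, g\<rangle>\<close> from below, the bound \<open>\<parallel>\<nabla>f y\<parallel>\<^sup>2 \<le> 2L (f y - f x\<^sub>*)\<close>
  to bound \<open>\<parallel>g\<parallel>\<^sup>2\<close>, and \<open>\<gamma>L/\<alpha> \<le> 1/4\<close>.\<close>

section \<open>Preconditioned quadratic forms\<close>

lemma diag_mat_transpose: "diag_mat D \<Longrightarrow> transpose D = D"
  unfolding diag_mat_def transpose_def by (simp add: vec_eq_iff) metis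

lemma symmetric_matrix_inner_commute:
  fixes D :: "real^'n^'n"
  assumes "transpose D = D"
  shows "x \<bullet> (D *v y) = (D *v x) \<bullet> y"
  by (metis assms dot_lmul_matrix vector_transpose_matrix)

lemma matrix_inv_right:
  fixes A :: "real^'n^'n"
  assumes "invertible A"
  shows "A ** matrix_inv A = mat 1"
  using assms unfolding invertible_def matrix_inv_def
  by (rule someI_ex[where P = "\<lambda>A'. A ** A' = mat 1 \<and> A' ** A = mat 1", THEN conjunct1])

lemma sqnormA_coercive_invertible:
  fixes D :: "real^'n^'n"
  assumes lower: "\<And>v. \<alpha> * (norm v)\<^sup>2 \<le> sqnormA D v" and "\<alpha> > 0"
  shows "invertible D"
proof -
  have "x = 0" if "D *v x = 0" for x
  proof -
    have "\<alpha> * (norm x)\<^sup>2 \<le> 0" using lower[of x] that by (simp add: sqnormA_def)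
    then show "x = 0" using \<open>\<alpha> > 0\<close> by (simp add: mult_le_0_iff)
  qed
  then show ?thesis
    using matrix_left_invertible_ker invertible_left_inverse by blast
qed

lemma matrix_vector_mult_matrix_inv:
  fixes A :: "real^'n^'n"
  assumes "invertible A"
  shows "A *v (matrix_inv A *v v) = v"
  by (metis assms matrix_inv_right matrix_vector_mul_assoc matrix_vector_mul_lid)

lemma inner_matrix_inv_le:
  fixes D :: "real^'n^'n"
  assumes lower: "\<And>v. \<alpha> * (norm v)\<^sup>2 \<le> sqnormA D v" and "\<alpha> > 0"
  shows "(matrix_inv D *v g) \<bullet> g \<le> (norm g)\<^sup>2 / \<alpha>"
proof -
  let ?w = "matrix_inv D *v g"
  have "sqnormA D ?w = ?w \<bullet> g"
    using matrix_vector_mult_matrix_inv[OF sqnormA_coercive_invertible[OF assms]]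
    by (simp add: sqnormA_def)
  then have coercive: "\<alpha> * (norm ?w)\<^sup>2 \<le> ?w \<bullet> g"
    using lower[of ?w] by simp
  have cauchy_schwarz: "?w \<bullet> g \<le> norm ?w * norm g"
    by (rule Cauchy_Schwarz_ineq2[THEN abs_le_D1])
  have "\<alpha> * norm ?w \<le> norm g"
  proof (cases "?w = 0")
    case False
    have "norm ?w * (\<alpha> * norm ?w) = \<alpha> * (norm ?w)\<^sup>2"
      by (simp add: power2_eq_square)
    also have "\<dots> \<le> norm ?w * norm g"
      using coercive cauchy_schwarz by linarith
    finally show ?thesis using False by simp
  qed (use norm_ge_zero in simp)
  then have "norm ?w * norm g \<le> norm g / \<alpha> * norm g"
    using \<open>\<alpha> > 0\<close> by (intro mult_right_mono) (simp_all add: field_simps)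
  then show ?thesis
    using cauchy_schwarz by (simp add: power2_eq_square)
qed

lemma sqnormA_precond_step:
  fixes D :: "real^'n^'n"
  assumes "transpose D = D" "invertible D"
  shows "sqnormA D (b - \<gamma> *\<^sub>R (matrix_inv D *v g))
    = sqnormA D b - 2 * \<gamma> * (b \<bullet> g) + \<gamma>\<^sup>2 * ((matrix_inv D *v g) \<bullet> g)"
proof -
  let ?w = "matrix_inv D *v g"
  have Dw: "D *v ?w = g" by (rule matrix_vector_mult_matrix_inv[OF assms(2)])
  have "?w \<bullet> (D *v b) = b \<bullet> g"
    using symmetric_matrix_inner_commute[OF assms(1), of ?w b] Dw by (simp add: inner_commute)
  with Dw show ?thesis
    by (simp add: sqnormA_def matrix_vector_mult_diff_distrib matrix_vector_mult_scaleR
        inner_diff_left inner_diff_right power2_eq_square algebra_simps)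
qed

lemma sqnormA_precond_step_le:
  fixes D :: "real^'n^'n"
  assumes "transpose D = D" and lower: "\<And>v. \<alpha> * (norm v)\<^sup>2 \<le> sqnormA D v" and "\<alpha> > 0"
  shows "sqnormA D (b - \<gamma> *\<^sub>R (matrix_inv D *v g))
    \<le> sqnormA D b - 2 * \<gamma> * (b \<bullet> g) + \<gamma>\<^sup>2 / \<alpha> * (norm g)\<^sup>2"
proof -
  have "\<gamma>\<^sup>2 * ((matrix_inv D *v g) \<bullet> g) \<le> \<gamma>\<^sup>2 * ((norm g)\<^sup>2 / \<alpha>)"
    using inner_matrix_inv_le[OF lower \<open>\<alpha> > 0\<close>] by (intro mult_left_mono) auto
  then show ?thesis
    unfolding sqnormA_precond_step[OF assms(1) sqnormA_coercive_invertible[OF lower \<open>\<alpha> > 0\<close>]]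
    by simp
qed

section \<open>Averages over the clients\<close>

definition mean_sq_dist :: "nat \<Rightarrow> (nat \<Rightarrow> real^'n) \<Rightarrow> real^'n \<Rightarrow> real" where
  "mean_sq_dist M a c = (1 / real M) * (\<Sum>j<M. (norm (a j - c))\<^sup>2)"

lemma mean_sq_dist_nonneg: "0 \<le> mean_sq_dist M a c"
  by (simp add: mean_sq_dist_def sum_nonneg)

lemma avg_cong: "(\<And>j. j < M \<Longrightarrow> a j = b j) \<Longrightarrow> avg M a = avg M b"
  by (simp add: avg_def)

lemma sum_diff_avg_eq_0:
  assumes "M \<ge> 1"
  shows "(\<Sum>j<M. a j - avg M a) = 0"
  using assms by (simp add: avg_def sum_subtractf sum_constant_scaleR del: sum_constant)

lemma mean_sq_dist_decomp:
  assumes "M \<ge> 1"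
  shows "mean_sq_dist M a c = (norm (avg M a - c))\<^sup>2 + mean_sq_dist M a (avg M a)"
proof -
  let ?h = "avg M a"
  have "(norm (a j - c))\<^sup>2 = (norm (a j - ?h))\<^sup>2 + 2 * ((a j - ?h) \<bullet> (?h - c)) + (norm (?h - c))\<^sup>2"
    for j
  proof -
    have "(norm (a j - c))\<^sup>2 = (norm ((a j - ?h) + (?h - c)))\<^sup>2"
      by simp
    also have "\<dots> = (norm (a j - ?h))\<^sup>2 + 2 * ((a j - ?h) \<bullet> (?h - c)) + (norm (?h - c))\<^sup>2"
      by (simp only: power2_norm_eq_inner inner_add_left inner_add_right
          inner_commute[of "?h - c" "a j - ?h"])
    finally show ?thesis .
  qed
  then have "(\<Sum>j<M. (norm (a j - c))\<^sup>2)
      = (\<Sum>j<M. (norm (a j - ?h))\<^sup>2) + 2 * ((\<Sum>j<M. a j - ?h) \<bullet> (?h - c)) + real M * (norm (?h - c))\<^sup>2"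
    by (simp add: sum.distrib sum_distrib_left inner_sum_left)
  then show ?thesis
    using assms by (simp add: sum_diff_avg_eq_0 mean_sq_dist_def field_simps)
qed

lemma norm_avg_sq_le:
  assumes "M \<ge> 1"
  shows "(norm (avg M a))\<^sup>2 \<le> mean_sq_dist M a 0"
  using mean_sq_dist_decomp[OF assms, of a 0] mean_sq_dist_nonneg[of M a] by simp

lemma avg_savic_step:
  assumes "M \<ge> 1"
  shows "avg M (savic_step M \<gamma> D sync xs gs) = avg M xs - \<gamma> *\<^sub>R (matrix_inv D *v avg M gs)"
proof -
  let ?local = "\<lambda>m. xs m - \<gamma> *\<^sub>R (matrix_inv D *v gs m)"
  have avg_local: "avg M ?local = avg M xs - \<gamma> *\<^sub>R (matrix_inv D *v avg M gs)"
    by (simp add: avg_def sum_subtractf scaleR_diff_right matrix_vector_mult_scaleR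
        linear_sum[OF matrix_vector_mul_linear] scaleR_sum_right)
  show ?thesis
  proof (cases sync)
    case True
    then have "savic_step M \<gamma> D sync xs gs = (\<lambda>m. avg M ?local)"
      by (simp add: savic_step_def avg_def fun_eq_iff)
    then show ?thesis
      using assms avg_local by (simp add: avg_def sum_constant_scaleR del: sum_constant)
  next
    case False
    then have "savic_step M \<gamma> D sync xs gs = ?local"
      by (simp add: savic_step_def fun_eq_iff)
    then show ?thesis
      using avg_local by simp
  qed
qed

section \<open>Smooth strongly convex functions\<close>

lemma smooth_grad_norm_sq_le:
  fixes f :: "real^'n \<Rightarrow> real" and gf :: "real^'n \<Rightarrow> real^'n"
  assumes upper: "\<And>x y. f x - f y - gf y \<bullet> (x - y) \<le> L / 2 * (norm (x - y))\<^sup>2"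
    and min: "\<And>y. f xstar \<le> f y" and "L > 0"
  shows "(norm (gf x))\<^sup>2 \<le> 2 * L * (f x - f xstar)"
proof -
  let ?g = "gf x"
  let ?y = "x - (1 / L) *\<^sub>R ?g"
  have inner_step: "?g \<bullet> (?y - x) = - (1 / L) * (norm ?g)\<^sup>2"
    by (simp add: power2_norm_eq_inner)
  have norm_step: "(norm (?y - x))\<^sup>2 = (1 / L)\<^sup>2 * (norm ?g)\<^sup>2"
    using \<open>L > 0\<close> by (simp add: power_divide)
  have "f ?y \<le> f x - (1 / L) * (norm ?g)\<^sup>2 + L / 2 * ((1 / L)\<^sup>2 * (norm ?g)\<^sup>2)"
    using upper[of ?y x] unfolding inner_step norm_step by simp
  also have "\<dots> = f x - (norm ?g)\<^sup>2 / (2 * L)"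
    using \<open>L > 0\<close> by (simp add: field_simps power2_eq_square)
  finally have "f xstar \<le> f x - (norm ?g)\<^sup>2 / (2 * L)"
    using min[of ?y] by simp
  then show ?thesis
    using \<open>L > 0\<close> by (simp add: field_simps)
qed

lemma avg_smooth_le:
  fixes f :: "real^'n \<Rightarrow> real" and gf :: "real^'n \<Rightarrow> real^'n"
  assumes "M \<ge> 1"
    and upper: "\<And>x y. f x - f y - gf y \<bullet> (x - y) \<le> L / 2 * (norm (x - y))\<^sup>2"
  shows "(1 / real M) * (\<Sum>m<M. f (xs m)) \<le> f (avg M xs) + L / 2 * mean_sq_dist M xs (avg M xs)"
proof -
  let ?h = "avg M xs"
  have "(\<Sum>m<M. gf ?h \<bullet> (xs m - ?h)) = 0"
    using sum_diff_avg_eq_0[OF \<open>M \<ge> 1\<close>, of xs] by (simp add: inner_sum_right[symmetric])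
  moreover have "(\<Sum>m<M. f (xs m) - f ?h - gf ?h \<bullet> (xs m - ?h))
      \<le> (\<Sum>m<M. L / 2 * (norm (xs m - ?h))\<^sup>2)"
    by (rule sum_mono) (rule upper)
  ultimately have "(\<Sum>m<M. f (xs m)) - real M * f ?h \<le> L / 2 * (\<Sum>m<M. (norm (xs m - ?h))\<^sup>2)"
    by (simp add: sum_subtractf sum_distrib_left)
  then show ?thesis
    using \<open>M \<ge> 1\<close> by (simp add: mean_sq_dist_def field_simps)
qed

lemma norm_avg_grad_sq_le:
  fixes f :: "real^'n \<Rightarrow> real" and gf :: "real^'n \<Rightarrow> real^'n"
  assumes "M \<ge> 1"
    and upper: "\<And>x y. f x - f y - gf y \<bullet> (x - y) \<le> L / 2 * (norm (x - y))\<^sup>2"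
    and min: "\<And>y. f xstar \<le> f y" and "L > 0"
  shows "(norm (avg M (\<lambda>m. gf (xs m))))\<^sup>2
    \<le> 2 * L * (f (avg M xs) - f xstar) + L\<^sup>2 * mean_sq_dist M xs (avg M xs)"
proof -
  have "(norm (avg M (\<lambda>m. gf (xs m))))\<^sup>2 \<le> (1 / real M) * (\<Sum>m<M. (norm (gf (xs m)))\<^sup>2)"
    using norm_avg_sq_le[OF \<open>M \<ge> 1\<close>] by (simp add: mean_sq_dist_def)
  also have "\<dots> \<le> (1 / real M) * (\<Sum>m<M. 2 * L * (f (xs m) - f xstar))"
    by (intro mult_left_mono sum_mono smooth_grad_norm_sq_le[OF upper min \<open>L > 0\<close>]) auto
  also have "\<dots> = 2 * L * ((1 / real M) * (\<Sum>m<M. f (xs m)) - f xstar)"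
    using \<open>M \<ge> 1\<close> by (simp add: sum_subtractf sum_distrib_left[symmetric] field_simps)
  also have "\<dots> \<le> 2 * L * (f (avg M xs) + L / 2 * mean_sq_dist M xs (avg M xs) - f xstar)"
    using avg_smooth_le[OF \<open>M \<ge> 1\<close> upper] \<open>L > 0\<close> by (intro mult_left_mono) auto
  finally show ?thesis
    by (simp add: power2_eq_square field_simps)
qed

lemma inner_avg_grad_ge:
  fixes f :: "real^'n \<Rightarrow> real" and gf :: "real^'n \<Rightarrow> real^'n"
  assumes "M \<ge> 1"
    and lower: "\<And>x y. \<mu> / 2 * (norm (x - y))\<^sup>2 \<le> f x - f y - gf y \<bullet> (x - y)"
    and upper: "\<And>x y. f x - f y - gf y \<bullet> (x - y) \<le> L / 2 * (norm (x - y))\<^sup>2"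
  shows "f (avg M xs) - f xstar + \<mu> / 2 * mean_sq_dist M xs xstar
      - L / 2 * mean_sq_dist M xs (avg M xs)
    \<le> (avg M xs - xstar) \<bullet> avg M (\<lambda>m. gf (xs m))"
proof -
  let ?h = "avg M xs"
  have client: "f ?h - f xstar + \<mu> / 2 * (norm (xs m - xstar))\<^sup>2 - L / 2 * (norm (xs m - ?h))\<^sup>2
      \<le> gf (xs m) \<bullet> (?h - xstar)" for m
  proof -
    have "gf (xs m) \<bullet> (?h - xstar) = gf (xs m) \<bullet> (?h - xs m) - gf (xs m) \<bullet> (xstar - xs m)"
      by (simp add: inner_diff_right)
    then show ?thesis
      using lower[of xstar "xs m"] upper[of ?h "xs m"] by (simp add: norm_minus_commute)
  qed
  have "real M * (f ?h - f xstar + \<mu> / 2 * mean_sq_dist M xs xstar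
        - L / 2 * mean_sq_dist M xs ?h)
      = (\<Sum>m<M. f ?h - f xstar + \<mu> / 2 * (norm (xs m - xstar))\<^sup>2 - L / 2 * (norm (xs m - ?h))\<^sup>2)"
    using \<open>M \<ge> 1\<close>
    by (simp add: mean_sq_dist_def sum.distrib sum_subtractf sum_distrib_left algebra_simps)
  also have "\<dots> \<le> (\<Sum>m<M. gf (xs m) \<bullet> (?h - xstar))"
    by (rule sum_mono) (rule client)
  also have "\<dots> = real M * ((?h - xstar) \<bullet> avg M (\<lambda>m. gf (xs m)))"
    using \<open>M \<ge> 1\<close> by (simp add: avg_def inner_sum_left inner_commute)
  finally show ?thesis
    using \<open>M \<ge> 1\<close> by simp
qed

lemma precond_mean_grad_step_le:
  fixes f :: "real^'n \<Rightarrow> real" and gf :: "real^'n \<Rightarrow> real^'n" and D :: "real^'n^'n"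
  assumes "M \<ge> 1"
    and lower: "\<And>x y. \<mu> / 2 * (norm (x - y))\<^sup>2 \<le> f x - f y - gf y \<bullet> (x - y)"
    and upper: "\<And>x y. f x - f y - gf y \<bullet> (x - y) \<le> L / 2 * (norm (x - y))\<^sup>2"
    and min: "\<And>y. f xstar \<le> f y" and "0 \<le> \<mu>" and "L > 0"
    and D_bounds: "\<And>v. \<alpha> * (norm v)\<^sup>2 \<le> sqnormA D v \<and> sqnormA D v \<le> \<Gamma> * (norm v)\<^sup>2"
    and "0 < \<alpha>" "\<alpha> \<le> \<Gamma>" "\<gamma> > 0" "4 * \<gamma> * L \<le> \<alpha>"
  shows "sqnormA D (avg M xs - xstar) - 2 * \<gamma> * ((avg M xs - xstar) \<bullet> avg M (\<lambda>m. gf (xs m)))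
      + \<gamma>\<^sup>2 / \<alpha> * (norm (avg M (\<lambda>m. gf (xs m))))\<^sup>2
    \<le> (1 - \<gamma> * \<mu> / \<Gamma>) * sqnormA D (avg M xs - xstar)
      - \<gamma> / 2 * bregman f gf (avg M xs) xstar
      + 2 * \<gamma> * L / \<alpha> * ((1 / real M) * (\<Sum>m<M. sqnormA D (xs m - avg M xs)))"
proof -
  define B where "B = avg M xs - xstar"
  define gb where "gb = avg M (\<lambda>m. gf (xs m))"
  define \<Delta> where "\<Delta> = f (avg M xs) - f xstar"
  define A where "A = mean_sq_dist M xs xstar"
  define V where "V = mean_sq_dist M xs (avg M xs)"
  define VD where "VD = (1 / real M) * (\<Sum>m<M. sqnormA D (xs m - avg M xs))"
  have "gf xstar = 0"
    using smooth_grad_norm_sq_le[OF upper min \<open>L > 0\<close>, of xstar] by simp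
  then have bregman: "bregman f gf (avg M xs) xstar = \<Delta>"
    by (simp add: bregman_def \<Delta>_def)
  have "0 \<le> \<Delta>" "0 \<le> V"
    using min[of "avg M xs"] mean_sq_dist_nonneg by (simp_all add: \<Delta>_def V_def)
  have inner: "\<Delta> + \<mu> / 2 * A - L / 2 * V \<le> B \<bullet> gb"
    using inner_avg_grad_ge[OF \<open>M \<ge> 1\<close> lower upper] by (simp add: \<Delta>_def A_def V_def B_def gb_def)
  have "\<gamma>\<^sup>2 / \<alpha> * (norm gb)\<^sup>2 \<le> \<gamma>\<^sup>2 / \<alpha> * (2 * L * \<Delta> + L\<^sup>2 * V)"
    using norm_avg_grad_sq_le[OF \<open>M \<ge> 1\<close> upper min \<open>L > 0\<close>] \<open>0 < \<alpha>\<close>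
    by (intro mult_left_mono) (simp_all add: gb_def \<Delta>_def V_def)
  also have "\<dots> = (\<gamma> * L / \<alpha>) * (2 * \<gamma> * \<Delta> + \<gamma> * L * V)"
    by (simp add: power2_eq_square field_simps)
  also have "\<dots> \<le> (1 / 4) * (2 * \<gamma> * \<Delta> + \<gamma> * L * V)"
    using \<open>4 * \<gamma> * L \<le> \<alpha>\<close> \<open>0 < \<alpha>\<close> \<open>\<gamma> > 0\<close> \<open>L > 0\<close> \<open>0 \<le> \<Delta>\<close> \<open>0 \<le> V\<close>
    by (intro mult_right_mono) (simp_all add: field_simps)
  finally have grad_term: "\<gamma>\<^sup>2 / \<alpha> * (norm gb)\<^sup>2 \<le> \<gamma> / 2 * \<Delta> + \<gamma> * L / 4 * V"
    by (simp add: field_simps)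
  have "sqnormA D B \<le> \<Gamma> * (norm B)\<^sup>2" "(norm B)\<^sup>2 \<le> A"
    using D_bounds[of B] mean_sq_dist_decomp[OF \<open>M \<ge> 1\<close>, of xs xstar] mean_sq_dist_nonneg
    by (simp_all add: A_def B_def)
  then have "sqnormA D B \<le> \<Gamma> * A"
    using \<open>0 < \<alpha>\<close> \<open>\<alpha> \<le> \<Gamma>\<close> by (meson order_trans mult_left_mono less_le_trans less_imp_le)
  then have "\<gamma> * \<mu> / \<Gamma> * sqnormA D B \<le> \<gamma> * \<mu> / \<Gamma> * (\<Gamma> * A)"
    using \<open>0 < \<alpha>\<close> \<open>\<alpha> \<le> \<Gamma>\<close> \<open>\<gamma> > 0\<close> \<open>0 \<le> \<mu>\<close> by (intro mult_left_mono) auto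
  then have contraction: "\<gamma> * \<mu> / \<Gamma> * sqnormA D B \<le> \<gamma> * \<mu> * A"
    using \<open>0 < \<alpha>\<close> \<open>\<alpha> \<le> \<Gamma>\<close> by simp
  have "(\<Sum>m<M. \<alpha> * (norm (xs m - avg M xs))\<^sup>2) \<le> (\<Sum>m<M. sqnormA D (xs m - avg M xs))"
    using D_bounds by (intro sum_mono) blast
  then have "\<alpha> * V \<le> VD"
    by (simp add: V_def VD_def mean_sq_dist_def sum_distrib_left[symmetric] divide_right_mono)
  then have consensus: "2 * \<gamma> * L * V \<le> 2 * \<gamma> * L / \<alpha> * VD"
    using \<open>0 < \<alpha>\<close> \<open>\<gamma> > 0\<close> \<open>L > 0\<close> by (simp add: field_simps)
  have "2 * \<gamma> * (\<Delta> + \<mu> / 2 * A - L / 2 * V) \<le> 2 * \<gamma> * (B \<bullet> gb)"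
    using inner \<open>\<gamma> > 0\<close> by simp
  moreover have "0 \<le> \<gamma> * \<Delta>" "0 \<le> \<gamma> * L * V"
    using \<open>\<gamma> > 0\<close> \<open>L > 0\<close> \<open>0 \<le> \<Delta>\<close> \<open>0 \<le> V\<close> by simp_all
  ultimately show ?thesis
    using grad_term contraction consensus
    unfolding bregman B_def[symmetric] gb_def[symmetric] VD_def[symmetric]
    by (simp add: algebra_simps)
qed

section \<open>Expectations\<close>

lemma (in prob_space) integral_norm_sq_decomp:
  fixes X :: "'a \<Rightarrow> 'b::{real_inner, banach, second_countable_topology}"
  assumes "integrable M X" "integrable M (\<lambda>x. (norm (X x))\<^sup>2)"
  shows "(\<integral>x. (norm (X x))\<^sup>2 \<partial>M)
    = (norm (\<integral>x. X x \<partial>M))\<^sup>2 + (\<integral>x. (norm (X x - (\<integral>x. X x \<partial>M)))\<^sup>2 \<partial>M)"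
proof -
  define c where "c = (\<integral>x. X x \<partial>M)"
  have "(norm (X x - c))\<^sup>2 = (norm (X x))\<^sup>2 - 2 * (X x \<bullet> c) + (norm c)\<^sup>2" for x
    by (simp add: power2_norm_eq_inner inner_diff_left inner_diff_right inner_commute)
  then have "(\<integral>x. (norm (X x - c))\<^sup>2 \<partial>M) = (\<integral>x. (norm (X x))\<^sup>2 \<partial>M) - 2 * (c \<bullet> c) + (norm c)\<^sup>2"
    using assms by (simp add: integral_diff integral_add prob_space c_def)
  then show ?thesis
    by (simp add: c_def power2_norm_eq_inner)
qed

lemma (in prob_space) expected_precond_step_le:
  fixes G :: "'a \<Rightarrow> real^'n" and D :: "real^'n^'n"
  assumes "transpose D = D" and lower: "\<And>v. \<alpha> * (norm v)\<^sup>2 \<le> sqnormA D v" and "\<alpha> > 0"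
    and G: "integrable M G" "integrable M (\<lambda>\<omega>. (norm (G \<omega>))\<^sup>2)"
  shows "(\<integral>\<omega>. sqnormA D (b - \<gamma> *\<^sub>R (matrix_inv D *v G \<omega>)) \<partial>M)
    \<le> sqnormA D b - 2 * \<gamma> * (b \<bullet> (\<integral>\<omega>. G \<omega> \<partial>M))
      + \<gamma>\<^sup>2 / \<alpha> * ((norm (\<integral>\<omega>. G \<omega> \<partial>M))\<^sup>2 + (\<integral>\<omega>. (norm (G \<omega> - (\<integral>\<omega>. G \<omega> \<partial>M)))\<^sup>2 \<partial>M))"
proof -
  define R where "R \<omega> = sqnormA D b - 2 * \<gamma> * (b \<bullet> G \<omega>) + \<gamma>\<^sup>2 / \<alpha> * (norm (G \<omega>))\<^sup>2" for \<omega>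
  have step_le: "sqnormA D (b - \<gamma> *\<^sub>R (matrix_inv D *v G \<omega>)) \<le> R \<omega>" for \<omega>
    unfolding R_def by (rule sqnormA_precond_step_le[OF assms(1) lower \<open>\<alpha> > 0\<close>])
  have "0 \<le> sqnormA D v" for v
    using lower[of v] \<open>\<alpha> > 0\<close> by (smt (verit) zero_le_mult_iff zero_le_power2)
  then have "(\<integral>\<omega>. sqnormA D (b - \<gamma> *\<^sub>R (matrix_inv D *v G \<omega>)) \<partial>M) \<le> (\<integral>\<omega>. R \<omega> \<partial>M)"
    using G step_le by (intro integral_mono') (auto simp: R_def intro: order_trans)
  also have "(\<integral>\<omega>. R \<omega> \<partial>M)
      = sqnormA D b - 2 * \<gamma> * (b \<bullet> (\<integral>\<omega>. G \<omega> \<partial>M)) + \<gamma>\<^sup>2 / \<alpha> * (\<integral>\<omega>. (norm (G \<omega>))\<^sup>2 \<partial>M)"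
    using G by (simp add: R_def integral_add integral_diff prob_space)
  finally show ?thesis
    unfolding integral_norm_sq_decomp[OF G] .
qed

lemma distr_sample_moments:
  fixes g :: "'z \<Rightarrow> 'b::{real_normed_vector, banach, second_countable_topology}"
  assumes Z: "Z \<in> measurable P S" "distr P S Z = Dz" and g: "g \<in> borel_measurable S"
    and "integrable Dz g" "integrable Dz (\<lambda>z. (norm (g z))\<^sup>2)"
  shows "integrable P (\<lambda>\<omega>. g (Z \<omega>))" "integrable P (\<lambda>\<omega>. (norm (g (Z \<omega>)))\<^sup>2)"
    and "(\<integral>\<omega>. g (Z \<omega>) \<partial>P) = (\<integral>z. g z \<partial>Dz)"
proof -
  have g_sq: "(\<lambda>z. (norm (g z))\<^sup>2) \<in> borel_measurable S"
    using g by measurable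
  show "integrable P (\<lambda>\<omega>. g (Z \<omega>))" "integrable P (\<lambda>\<omega>. (norm (g (Z \<omega>)))\<^sup>2)"
    using integrable_distr_eq[OF Z(1) g] integrable_distr_eq[OF Z(1) g_sq] assms(4,5)
    by (simp_all add: Z(2))
  show "(\<integral>\<omega>. g (Z \<omega>) \<partial>P) = (\<integral>z. g z \<partial>Dz)"
    using integral_distr[OF Z(1) g] by (simp add: Z(2))
qed

lemma integrable_avg_moments:
  fixes X :: "nat \<Rightarrow> 'w \<Rightarrow> real^'n"
  assumes "M \<ge> 1"
    and X: "\<And>j. j < M \<Longrightarrow> integrable P (X j)"
    and X_sq: "\<And>j. j < M \<Longrightarrow> integrable P (\<lambda>\<omega>. (norm (X j \<omega>))\<^sup>2)"
  shows "integrable P (\<lambda>\<omega>. avg M (\<lambda>j. X j \<omega>))"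
    and "integrable P (\<lambda>\<omega>. (norm (avg M (\<lambda>j. X j \<omega>)))\<^sup>2)"
    and "(\<integral>\<omega>. avg M (\<lambda>j. X j \<omega>) \<partial>P) = avg M (\<lambda>j. \<integral>\<omega>. X j \<omega> \<partial>P)"
proof -
  show avg_int: "integrable P (\<lambda>\<omega>. avg M (\<lambda>j. X j \<omega>))"
    unfolding avg_def using X
    by (intro integrable_scaleR_right Bochner_Integration.integrable_sum) auto
  show "(\<integral>\<omega>. avg M (\<lambda>j. X j \<omega>) \<partial>P) = avg M (\<lambda>j. \<integral>\<omega>. X j \<omega> \<partial>P)"
    unfolding avg_def using X by (simp add: Bochner_Integration.integral_sum)
  show "integrable P (\<lambda>\<omega>. (norm (avg M (\<lambda>j. X j \<omega>)))\<^sup>2)"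
  proof (rule Bochner_Integration.integrable_bound)
    show "integrable P (\<lambda>\<omega>. mean_sq_dist M (\<lambda>j. X j \<omega>) 0)"
      unfolding mean_sq_dist_def using X_sq
      by (intro integrable_mult_right Bochner_Integration.integrable_sum) auto
    show "(\<lambda>\<omega>. (norm (avg M (\<lambda>j. X j \<omega>)))\<^sup>2) \<in> borel_measurable P"
      using borel_measurable_integrable[OF avg_int] by measurable
    show "AE \<omega> in P. norm ((norm (avg M (\<lambda>j. X j \<omega>)))\<^sup>2) \<le> norm (mean_sq_dist M (\<lambda>j. X j \<omega>) 0)"
      using norm_avg_sq_le[OF \<open>M \<ge> 1\<close>]
      by (intro AE_I2) (simp add: abs_of_nonneg[OF mean_sq_dist_nonneg])
  qed
qed

theorem lemma3:
  fixes f :: "real^'n \<Rightarrow> real" and gf :: "real^'n \<Rightarrow> real^'n"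
    and sgf :: "real^'n \<Rightarrow> 'z \<Rightarrow> real^'n"
    and P :: "'w measure" and S :: "'z measure" and Dz :: "'z measure"
    and Z :: "nat \<Rightarrow> 'w \<Rightarrow> 'z"
    and M :: nat and \<mu> L \<alpha> \<Gamma> \<gamma> :: real
    and D :: "real^'n^'n" and xs :: "nat \<Rightarrow> real^'n" and xstar :: "real^'n"
    and sync :: bool
  assumes M_pos: "M \<ge> 1"
    and grad: "\<And>x. (f has_derivative (\<lambda>h. gf x \<bullet> h)) (at x)"
    and strong_smooth: "\<And>x y. \<mu> / 2 * (norm (x - y))\<^sup>2 \<le> f x - f y - gf y \<bullet> (x - y)
                          \<and> f x - f y - gf y \<bullet> (x - y) \<le> L / 2 * (norm (x - y))\<^sup>2"
    and mu_pos: "\<mu> > 0"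
    and xstar_min: "\<And>y. f xstar \<le> f y"
    and P_prob: "prob_space P"
    and Dz_prob: "prob_space Dz"
    and Z_meas: "\<And>m. m < M \<Longrightarrow> Z m \<in> measurable P S"
    and Z_distr: "\<And>m. m < M \<Longrightarrow> distr P S (Z m) = Dz"
    and Z_indep: "prob_space.indep_vars P (\<lambda>_. S) Z {..<M}"
    and sets_Dz: "sets Dz = sets S"
    and sg_meas: "\<And>x. sgf x \<in> borel_measurable S"
    and sg_int: "\<And>x. integrable Dz (sgf x)"
    and sg_sq_int: "\<And>x. integrable Dz (\<lambda>z. (norm (sgf x z))\<^sup>2)"
    and sg_unbiased: "\<And>x. (\<integral>z. sgf x z \<partial>Dz) = gf x"
    and D_diag: "diag_mat D"
    and alpha_pos: "0 < \<alpha>" and alpha_le: "\<alpha> \<le> \<Gamma>"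
    and D_bounds: "\<And>v. \<alpha> * (norm v)\<^sup>2 \<le> sqnormA D v \<and> sqnormA D v \<le> \<Gamma> * (norm v)\<^sup>2"
    and gamma_pos: "\<gamma> > 0" and gamma_le: "\<gamma> \<le> \<alpha> / (4 * L)"
  shows
    "(\<integral>\<omega>. sqnormA D (avg M (savic_step M \<gamma> D sync xs (\<lambda>j. sgf (xs j) (Z j \<omega>))) - xstar) \<partial>P)
     \<le> (1 - \<gamma> * \<mu> / \<Gamma>) * sqnormA D (avg M xs - xstar)
       + \<gamma>\<^sup>2 / \<alpha> * (\<integral>\<omega>. (norm (avg M (\<lambda>j. sgf (xs j) (Z j \<omega>)) - avg M (\<lambda>j. gf (xs j))))\<^sup>2 \<partial>P)
       - \<gamma> / 2 * bregman f gf (avg M xs) xstar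
       + 2 * \<gamma> * L / \<alpha> * ((1 / real M) * (\<Sum>m<M. sqnormA D (xs m - avg M xs)))"
proof -
  interpret P: prob_space P by (rule P_prob)
  \<comment> \<open>\<open>L > 0\<close> is implicit: otherwise \<open>\<alpha> / (4 * L) \<le> 0 < \<gamma>\<close> (recall \<open>x / 0 = 0\<close>).\<close>
  have "L > 0"
    using gamma_le gamma_pos alpha_pos by (smt (verit) divide_nonneg_nonpos)
  then have "4 * \<gamma> * L \<le> \<alpha>"
    using gamma_le by (simp add: field_simps)
  define G where "G = (\<lambda>\<omega>. avg M (\<lambda>j. sgf (xs j) (Z j \<omega>)))"
  have sample: "integrable P (\<lambda>\<omega>. sgf (xs j) (Z j \<omega>))"
      "integrable P (\<lambda>\<omega>. (norm (sgf (xs j) (Z j \<omega>)))\<^sup>2)"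
      "(\<integral>\<omega>. sgf (xs j) (Z j \<omega>) \<partial>P) = gf (xs j)" if "j < M" for j
    using distr_sample_moments[OF Z_meas[OF that] Z_distr[OF that] sg_meas sg_int sg_sq_int]
      sg_unbiased by simp_all
  have G: "integrable P G" "integrable P (\<lambda>\<omega>. (norm (G \<omega>))\<^sup>2)"
      "(\<integral>\<omega>. G \<omega> \<partial>P) = avg M (\<lambda>j. gf (xs j))"
    using integrable_avg_moments[OF M_pos, where X = "\<lambda>j \<omega>. sgf (xs j) (Z j \<omega>)" and P = P]
      sample avg_cong[of M "\<lambda>j. \<integral>\<omega>. sgf (xs j) (Z j \<omega>) \<partial>P"]
    by (simp_all add: G_def)
  have "(\<integral>\<omega>. sqnormA D (avg M (savic_step M \<gamma> D sync xs (\<lambda>j. sgf (xs j) (Z j \<omega>))) - xstar) \<partial>P)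
      = (\<integral>\<omega>. sqnormA D ((avg M xs - xstar) - \<gamma> *\<^sub>R (matrix_inv D *v G \<omega>)) \<partial>P)"
    by (simp add: avg_savic_step[OF M_pos] G_def algebra_simps)
  also have "\<dots> \<le> sqnormA D (avg M xs - xstar) - 2 * \<gamma> * ((avg M xs - xstar) \<bullet> avg M (\<lambda>j. gf (xs j)))
      + \<gamma>\<^sup>2 / \<alpha> * ((norm (avg M (\<lambda>j. gf (xs j))))\<^sup>2
        + (\<integral>\<omega>. (norm (G \<omega> - avg M (\<lambda>j. gf (xs j))))\<^sup>2 \<partial>P))"
    using P.expected_precond_step_le[OF diag_mat_transpose[OF D_diag] _ alpha_pos G(1,2)]
      D_bounds unfolding G(3) by blast
  finally show ?thesis
    using precond_mean_grad_step_le[OF M_pos conjunct1[OF strong_smooth] conjunct2[OF strong_smooth]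
        xstar_min less_imp_le[OF mu_pos] \<open>L > 0\<close> D_bounds alpha_pos alpha_le gamma_pos
        \<open>4 * \<gamma> * L \<le> \<alpha>\<close>, of xs]
    unfolding G_def by (simp add: algebra_simps)
qed

end
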